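(* Let $n=p_1^{\alpha_1}p_2^{\alpha_2}\cdots p_k^{\alpha_k}$ where $p_1,\dots,p_k$ are distinct primes, $\alpha_i\geq 1$, and $k\geq 5$. Then $\mathbb{AG}(\mathbb{Z}_n)$ is not perfect.
   Context: For a commutative ring $R$ with unity, the annihilating-ideal graph $\mathbb{AG}(R)$ is the simple graph whose vertex set is the set of all non-zero ideals of $R$ with non-zero annihilator, two distinct vertices $I,J$ being adjacent if and only if $IJ=0$. A graph $G$ is perfect if $\omega(H)=\chi(H)$ for every induced subgraph $H$ of $G$. *)

theory Defs
  imports "HOL-Algebra.Ideal_Product" "HOL-Number_Theory.Residues" "HOL-Library.Extended_Nat"
begin

definition ann :: "('a, 'b) ring_scheme \<Rightarrow> 'a set \<Rightarrow> 'a set" where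
  "ann R I = {x \<in> carrier R. \<forall>a\<in>I. x \<otimes>\<^bsub>R\<^esub> a = \<zero>\<^bsub>R\<^esub>}"

definition AG_vertices :: "('a, 'b) ring_scheme \<Rightarrow> 'a set set" where
  "AG_vertices R = {I. ideal I R \<and> I \<noteq> {\<zero>\<^bsub>R\<^esub>} \<and> ann R I \<noteq> {\<zero>\<^bsub>R\<^esub>}}"

definition AG_adj :: "('a, 'b) ring_scheme \<Rightarrow> 'a set \<Rightarrow> 'a set \<Rightarrow> bool" where
  "AG_adj R I J \<longleftrightarrow> I \<noteq> J \<and> ideal_prod R I J = {\<zero>\<^bsub>R\<^esub>}"

definition is_clique :: "('v \<Rightarrow> 'v \<Rightarrow> bool) \<Rightarrow> 'v set \<Rightarrow> bool" where
  "is_clique E C \<longleftrightarrow> (\<forall>x\<in>C. \<forall>y\<in>C. x \<noteq> y \<longrightarrow> E x y)"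

definition clique_number :: "'v set \<Rightarrow> ('v \<Rightarrow> 'v \<Rightarrow> bool) \<Rightarrow> enat" where
  "clique_number S E = Sup {enat (card C) | C. C \<subseteq> S \<and> finite C \<and> is_clique E C}"

definition proper_colouring :: "'v set \<Rightarrow> ('v \<Rightarrow> 'v \<Rightarrow> bool) \<Rightarrow> nat \<Rightarrow> ('v \<Rightarrow> nat) \<Rightarrow> bool" where
  "proper_colouring S E k f \<longleftrightarrow>
     (\<forall>x\<in>S. f x < k) \<and> (\<forall>x\<in>S. \<forall>y\<in>S. E x y \<longrightarrow> f x \<noteq> f y)"

definition chromatic_number :: "'v set \<Rightarrow> ('v \<Rightarrow> 'v \<Rightarrow> bool) \<Rightarrow> enat" where
  "chromatic_number S E = Inf {enat k | k. \<exists>f. proper_colouring S E k f}"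

definition perfect_graph :: "'v set \<Rightarrow> ('v \<Rightarrow> 'v \<Rightarrow> bool) \<Rightarrow> bool" where
  "perfect_graph V E \<longleftrightarrow> (\<forall>S\<subseteq>V. clique_number S E = chromatic_number S E)"

end

theory Submission imports Defs begin

text \<open>The pentagon occurs as an induced subgraph; being triangle-free it has clique number 2,
  but as an odd cycle it needs 3 colours. To embed it into \<open>\<A>\<G>(\<int>\<^sub>n)\<close>, label the vertices of
  the pentagon by the 2-sets \<open>{i, i + 2}\<close> of \<open>\<int>\<^sub>5\<close>, so that neighbours are exactly the
  vertices with disjoint labels. Fixing distinct prime factors \<open>p\<^sub>0, \<dots>, p\<^sub>4\<close> of \<open>n\<close>, realise
  a label \<open>L\<close> by the principal ideal generated by the part of \<open>n\<close> coprime to the \<open>p\<^sub>l\<close>,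
  \<open>l \<in> L\<close>: two such generators multiply to a multiple of \<open>n\<close> exactly when no prime is
  omitted by both.\<close>

definition cycle5_adj :: "nat \<Rightarrow> nat \<Rightarrow> bool" where
  "cycle5_adj i j \<longleftrightarrow> (i + 1) mod 5 = j \<or> (j + 1) mod 5 = i"

definition cycle5_label :: "nat \<Rightarrow> nat set" where
  "cycle5_label i = {i, (i + 2) mod 5}"

lemma less_5_cases: "i < (5::nat) \<Longrightarrow> i = 0 \<or> i = 1 \<or> i = 2 \<or> i = 3 \<or> i = 4"
  by auto

lemma cycle5_adj_irrefl: "i < 5 \<Longrightarrow> \<not> cycle5_adj i i"
  by (drule less_5_cases) (auto simp: cycle5_adj_def)

lemma cycle5_adj_Suc_mod: "cycle5_adj ((i + 1) mod 5) i"
  by (auto simp: cycle5_adj_def)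

lemma cycle5_label_subset: "i < 5 \<Longrightarrow> cycle5_label i \<subseteq> {..<5}"
  unfolding cycle5_label_def by auto

lemma cycle5_adj_iff_disjoint_labels:
  assumes "i < 5" "j < 5"
  shows "cycle5_adj i j \<longleftrightarrow> cycle5_label i \<inter> cycle5_label j = {}"
  using less_5_cases[OF assms(1)] less_5_cases[OF assms(2)]
  unfolding cycle5_adj_def cycle5_label_def by (elim disjE) auto

lemma cycle5_triangle_free:
  assumes "a < 5" "b < 5" "c < 5" "cycle5_adj a b" "cycle5_adj a c" "cycle5_adj b c"
  shows False
  using less_5_cases[OF assms(1)] less_5_cases[OF assms(2)] less_5_cases[OF assms(3)] assms(4-6)
  unfolding cycle5_adj_def by (elim disjE) auto

lemma clique_number_le:
  assumes "\<And>C. C \<subseteq> S \<Longrightarrow> finite C \<Longrightarrow> is_clique E C \<Longrightarrow> card C \<le> m"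
  shows "clique_number S E \<le> enat m"
  unfolding clique_number_def by (rule Sup_least) (use assms in auto)

lemma chromatic_number_ge:
  assumes "\<And>k f. proper_colouring S E k f \<Longrightarrow> m \<le> k"
  shows "enat m \<le> chromatic_number S E"
  unfolding chromatic_number_def by (rule Inf_greatest) (use assms in auto)

lemma clique_number_induced_cycle5:
  assumes E: "\<forall>i<5. \<forall>j<5. E (x i) (x j) \<longleftrightarrow> cycle5_adj i j"
  shows "clique_number (x ` {..<5}) E \<le> 2"
proof -
  have "card C \<le> 2" if C: "C \<subseteq> x ` {..<5}" "is_clique E C" for C
  proof (rule ccontr)
    assume "\<not> card C \<le> 2"
    then have "3 \<le> card C" by simp
    then obtain T where T: "T \<subseteq> C" "card T = 3" by (meson obtain_subset_with_card_n)
    then obtain u v w where uvw: "T = {u, v, w}" "u \<noteq> v" "v \<noteq> w" "u \<noteq> w"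
      by (auto simp: card_3_iff)
    moreover have "{u, v, w} \<subseteq> x ` {..<5}" using T C(1) uvw(1) by blast
    ultimately obtain a b c where abc: "a < 5" "b < 5" "c < 5" "u = x a" "v = x b" "w = x c"
      by auto
    have "E u v" "E u w" "E v w" using C(2) T uvw unfolding is_clique_def by auto
    then show False using cycle5_triangle_free[OF abc(1-3)] E abc by auto
  qed
  then show ?thesis using clique_number_le[of "x ` {..<5}" E 2] by (simp add: numeral_eq_enat)
qed

lemma chromatic_number_induced_cycle5:
  assumes E: "\<forall>i<5. \<forall>j<5. E (x i) (x j) \<longleftrightarrow> cycle5_adj i j"
  shows "chromatic_number (x ` {..<5}) E \<ge> 3"
proof -
  have "3 \<le> k" if f: "proper_colouring (x ` {..<5}) E k f" for k f
  proof -
    have "f (x i) < k" if "i < 5" for i using f that unfolding proper_colouring_def by auto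
    moreover have "f (x i) \<noteq> f (x j)" if "i < 5" "j < 5" "cycle5_adj i j" for i j
      using f that E unfolding proper_colouring_def by auto
    ultimately have "f (x 0) < k" "f (x 1) < k" "f (x 2) < k" "f (x 3) < k" "f (x 4) < k"
      "f (x 0) \<noteq> f (x 1)" "f (x 1) \<noteq> f (x 2)" "f (x 2) \<noteq> f (x 3)"
      "f (x 3) \<noteq> f (x 4)" "f (x 4) \<noteq> f (x 0)"
      by (simp_all add: cycle5_adj_def)
    then show "3 \<le> k" by linarith
  qed
  then show ?thesis using chromatic_number_ge[of "x ` {..<5}" E 3] by (simp add: numeral_eq_enat)
qed

lemma not_perfect_if_induced_cycle5:
  assumes "x ` {..<5} \<subseteq> V" and "\<forall>i<5. \<forall>j<5. E (x i) (x j) \<longleftrightarrow> cycle5_adj i j"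
  shows "\<not> perfect_graph V E"
proof
  assume "perfect_graph V E"
  then have eq: "clique_number (x ` {..<5}) E = chromatic_number (x ` {..<5}) E"
    using assms(1) unfolding perfect_graph_def by blast
  have "(3::enat) \<le> chromatic_number (x ` {..<5}) E"
    using chromatic_number_induced_cycle5[of E x] assms(2) by blast
  also have "\<dots> = clique_number (x ` {..<5}) E" using eq by simp
  also have "\<dots> \<le> 2" using clique_number_induced_cycle5[of E x] assms(2) by blast
  finally show False by (simp add: numeral_eq_enat)
qed

definition coprime_part :: "nat \<Rightarrow> nat set \<Rightarrow> nat" where
  "coprime_part n T = (\<Prod>p \<in> prime_factors n - T. p ^ multiplicity p n)"

lemma prime_not_dvd_coprime_part:
  assumes "prime p" "p \<in> T"
  shows "\<not> p dvd coprime_part n T"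
proof
  assume "p dvd coprime_part n T"
  then obtain q where q: "q \<in> prime_factors n - T" "p dvd q ^ multiplicity q n"
    unfolding coprime_part_def prime_dvd_prod_iff[OF finite_Diff[OF finite_set_mset] assms(1)] ..
  then have "p dvd q" using prime_dvd_power[OF assms(1)] by blast
  then have "p = q" using q(1) primes_dvd_imp_eq[OF assms(1)] by auto
  with q(1) assms(2) show False by blast
qed

lemma dvd_coprime_part_mult_iff:
  assumes "n \<noteq> 0"
  shows "n dvd coprime_part n T * coprime_part n U \<longleftrightarrow> T \<inter> U \<inter> prime_factors n = {}"
proof
  assume n_dvd: "n dvd coprime_part n T * coprime_part n U"
  show "T \<inter> U \<inter> prime_factors n = {}"
  proof (rule ccontr)
    assume "T \<inter> U \<inter> prime_factors n \<noteq> {}"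
    then obtain p where p: "p \<in> T" "p \<in> U" "prime p" "p dvd n" by auto
    then have "p dvd coprime_part n T * coprime_part n U" using n_dvd dvd_trans by blast
    then show False
      using prime_not_dvd_coprime_part p by (auto simp: prime_dvd_mult_iff)
  qed
next
  assume disj: "T \<inter> U \<inter> prime_factors n = {}"
  let ?f = "\<lambda>p. p ^ multiplicity p n"
  have "(prime_factors n - T) \<union> (prime_factors n - U) = prime_factors n" using disj by blast
  then have "coprime_part n T * coprime_part n U
      = (\<Prod>p \<in> prime_factors n. ?f p) * (\<Prod>p \<in> (prime_factors n - T) \<inter> (prime_factors n - U). ?f p)"
    unfolding coprime_part_def
    using prod.union_inter[of "prime_factors n - T" "prime_factors n - U" ?f] by simp
  also have "(\<Prod>p \<in> prime_factors n. ?f p) = n"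
    using assms prime_factorization_nat by auto
  finally show "n dvd coprime_part n T * coprime_part n U" by simp
qed

lemma cycle5_divisor_pattern:
  fixes n :: nat
  assumes "card (prime_factors n) \<ge> 5"
  obtains a :: "nat \<Rightarrow> nat" where "\<forall>i<5. \<forall>j<5. n dvd a i * a j \<longleftrightarrow> cycle5_adj i j"
proof -
  have "n \<noteq> 0" using assms by (cases "n = 0") auto
  obtain p :: "nat \<Rightarrow> nat" where p: "p ` {..<5} \<subseteq> prime_factors n" "inj_on p {..<5}"
    using card_le_inj[of "{..<5::nat}" "prime_factors n"] assms by fastforce
  define a where "a i = coprime_part n (p ` cycle5_label i)" for i
  have "n dvd a i * a j \<longleftrightarrow> cycle5_adj i j" if "i < 5" "j < 5" for i j
  proof -
    have "p ` cycle5_label i \<inter> p ` cycle5_label j = p ` (cycle5_label i \<inter> cycle5_label j)"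
      using inj_on_image_Int[OF p(2) cycle5_label_subset cycle5_label_subset] that by blast
    moreover have "p ` cycle5_label i \<subseteq> prime_factors n"
      using p(1) cycle5_label_subset[OF that(1)] by blast
    ultimately have "p ` cycle5_label i \<inter> p ` cycle5_label j \<inter> prime_factors n = {}
        \<longleftrightarrow> cycle5_label i \<inter> cycle5_label j = {}"
      by auto
    then show ?thesis
      unfolding a_def dvd_coprime_part_mult_iff[OF \<open>n \<noteq> 0\<close>]
        cycle5_adj_iff_disjoint_labels[OF that] .
  qed
  then show thesis using that by blast
qed

lemma (in cring) PIdl_eq_zero_iff:
  assumes "a \<in> carrier R"
  shows "PIdl a = {\<zero>} \<longleftrightarrow> a = \<zero>"
  using cgenideal_self[OF assms] cgenideal_eq_genideal[OF zero_closed] genideal_zero by auto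

lemma (in cring) ideal_prod_PIdl:
  assumes "a \<in> carrier R" "b \<in> carrier R"
  shows "ideal_prod R (PIdl a) (PIdl b) = PIdl (a \<otimes> b)"
proof -
  have "ideal_prod R (PIdl a) (PIdl b) = Idl (PIdl (a \<otimes> b))"
    using ideal_prod_eq_genideal[of "Idl {a}" "Idl {b}"] assms
      cgenideal_eq_genideal cgenideal_ideal cgenideal_prod by auto
  moreover have ab: "a \<otimes> b \<in> carrier R" using assms by simp
  then have "PIdl (a \<otimes> b) \<subseteq> carrier R" using ideal.Icarr[OF cgenideal_ideal] by blast
  then have "Idl (PIdl (a \<otimes> b)) = PIdl (a \<otimes> b)"
    using genideal_minimal[OF cgenideal_ideal[OF ab] subset_refl] genideal_self by blast
  ultimately show ?thesis by simp
qed

lemma (in cring) AG_adj_PIdl_iff: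
  assumes "a \<in> carrier R" "b \<in> carrier R" "a \<otimes> a \<noteq> \<zero>"
  shows "AG_adj R (PIdl a) (PIdl b) \<longleftrightarrow> a \<otimes> b = \<zero>"
proof -
  have "PIdl a \<noteq> PIdl b" if "a \<otimes> b = \<zero>"
  proof
    assume "PIdl a = PIdl b"
    then have "PIdl (a \<otimes> a) = PIdl (a \<otimes> b)"
      using ideal_prod_PIdl[OF assms(1,1)] ideal_prod_PIdl[OF assms(1,2)] by metis
    then show False
      using that assms PIdl_eq_zero_iff[OF m_closed[OF assms(1,1)]] PIdl_eq_zero_iff[OF zero_closed]
      by simp
  qed
  then show ?thesis
    unfolding AG_adj_def ideal_prod_PIdl[OF assms(1,2)] PIdl_eq_zero_iff[OF m_closed[OF assms(1,2)]]
    by blast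
qed

lemma (in cring) PIdl_in_AG_vertices:
  assumes "a \<in> carrier R" "b \<in> carrier R" "a \<noteq> \<zero>" "b \<noteq> \<zero>" "b \<otimes> a = \<zero>"
  shows "PIdl a \<in> AG_vertices R"
proof -
  have "b \<otimes> (u \<otimes> a) = \<zero>" if "u \<in> carrier R" for u
    using assms that by (simp add: m_lcomm[of b u a])
  then have "b \<in> ann R (PIdl a)"
    unfolding ann_def cgenideal_def using assms(2) by blast
  then show ?thesis
    unfolding AG_vertices_def
    using assms PIdl_eq_zero_iff cgenideal_ideal by auto
qed

lemma (in cring) not_perfect_AG_if_cycle5_zero_products:
  assumes carr: "\<And>i. i < 5 \<Longrightarrow> e i \<in> carrier R"
    and zero: "\<forall>i<5. \<forall>j<5. e i \<otimes> e j = \<zero> \<longleftrightarrow> cycle5_adj i j"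
  shows "\<not> perfect_graph (AG_vertices R) (AG_adj R)"
proof (rule not_perfect_if_induced_cycle5)
  have sq: "e i \<otimes> e i \<noteq> \<zero>" if "i < 5" for i
    using zero cycle5_adj_irrefl that by blast
  show "\<forall>i<5. \<forall>j<5. AG_adj R (PIdl (e i)) (PIdl (e j)) \<longleftrightarrow> cycle5_adj i j"
    using AG_adj_PIdl_iff carr sq zero by auto
  show "(\<lambda>i. PIdl (e i)) ` {..<5} \<subseteq> AG_vertices R"
  proof clarsimp
    fix i :: nat assume i: "i < 5"
    define j where "j = (i + 1) mod 5"
    have j: "j < 5" unfolding j_def by simp
    have "e i \<noteq> \<zero>" "e j \<noteq> \<zero>" using sq[OF i] sq[OF j] carr i j by auto
    moreover have "e j \<otimes> e i = \<zero>"
      using zero cycle5_adj_Suc_mod[of i] i j unfolding j_def by blast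
    ultimately show "PIdl (e i) \<in> AG_vertices R"
      using PIdl_in_AG_vertices[OF carr[OF i] carr[OF j]] by blast
  qed
qed

lemma (in residues) res_mult_mod_eq_zero_iff: "(x mod m) \<otimes> (y mod m) = \<zero> \<longleftrightarrow> m dvd x * y"
  by (simp add: res_mult_eq res_zero_eq mod_mult_eq dvd_eq_mod_eq_0)

theorem lemma1:
  fixes n :: nat
  assumes "card (prime_factors n) \<ge> 5"
  shows "\<not> perfect_graph (AG_vertices (residue_ring (int n))) (AG_adj (residue_ring (int n)))"
proof -
  obtain a where a: "\<forall>i<5. \<forall>j<5. n dvd a i * a j \<longleftrightarrow> cycle5_adj i j"
    using cycle5_divisor_pattern[OF assms] by blast
  have "n > 1" using assms by (cases "n = 0 \<or> n = 1") auto
  define R where "R = residue_ring (int n)"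
  interpret residues "int n" R
    by unfold_locales (use \<open>n > 1\<close> R_def in auto)
  have "\<not> perfect_graph (AG_vertices R) (AG_adj R)"
  proof (rule not_perfect_AG_if_cycle5_zero_products)
    show "int (a i) mod int n \<in> carrier R" for i
      using \<open>n > 1\<close> by (simp add: res_carrier_eq)
    show "\<forall>i<5. \<forall>j<5. (int (a i) mod int n) \<otimes>\<^bsub>R\<^esub> (int (a j) mod int n) = \<zero>\<^bsub>R\<^esub>
        \<longleftrightarrow> cycle5_adj i j"
      using a by (simp add: res_mult_mod_eq_zero_iff flip: of_nat_mult)
  qed
  then show ?thesis unfolding R_def .
qed

end
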